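(* Suppose that for some $j\in\{2,\dots,n-1\}$ and $\ell>0$ the offline optimal solution takes the form of Structure 1 or Structure 2 on the interval $[j,j+\ell-1]\subseteq\{2,\dots,n-1\}$. Then the optimal dual variable satisfies $\lambda\le \frac{(B+G)\ell}{2}$.
   Context: Setting: $n\ge 3$, $B\ge 1$, $G\ge B$, labels $y_1,\dots,y_n\in[-G,G]$; $[a,b]=\{a,\dots,b\}$. Given $C_n>0$, the offline optimal $u_1,\dots,u_n$ is an optimal solution of: minimize $\frac12\sum_{t=1}^n(y_t-\tilde u_t)^2$ over $\tilde u\in\mathbb R^n$ subject to $\sum_{t=2}^{n}|\tilde u_t-\tilde u_{t-1}|\le C_n$ and $-B\le\tilde u_t\le B$ for all $t$. Let $\lambda\ge 0$ be an optimal dual variable for the total variation constraint and $\gamma_t^-,\gamma_t^+\ge0$ optimal dual variables for $-B\le\tilde u_t$ and $\tilde u_t\le B$. They satisfy the KKT conditions: there are $s_t\in[-1,1]$ ($t=1,\dots,n-1$) with $s_t=\mathrm{sign}(u_{t+1}-u_t)$ whenever $u_{t+1}\ne u_t$, and with $s_0=s_n=0$, such that $u_t-y_t=\lambda(s_t-s_{t-1})+\gamma_t^--\gamma_t^+$ for all $t\in[n]$, $\lambda(\sum_{t=2}^n|u_t-u_{t-1}|-C_n)=0$, $\gamma_t^-(u_t+B)=0$, $\gamma_t^+(u_t-B)=0$. Structure 1 on $[a,b]\subseteq\{2,\dots,n-1\}$: $u_j=u_a\in(-B,B)$ for all $j\in[a,b]$, $u_b>u_{b+1}$ and $u_a>u_{a-1}$.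 Structure 2 on $[a,b]\subseteq\{2,\dots,n-1\}$: $u_j=u_a\in(-B,B)$ for all $j\in[a,b]$, $u_b<u_{b+1}$ and $u_a<u_{a-1}$. *)

theory Defs
  imports Main "HOL.Real"
begin

text \<open>Sequences are functions nat => real; only indices 1..n matter.\<close>

definition tv_feasible :: "nat \<Rightarrow> real \<Rightarrow> real \<Rightarrow> (nat \<Rightarrow> real) \<Rightarrow> bool" where
  "tv_feasible n B C v \<longleftrightarrow>
     (\<Sum>t=2..n. \<bar>v t - v (t - 1)\<bar>) \<le> C \<and> (\<forall>t\<in>{1..n}. - B \<le> v t \<and> v t \<le> B)"

definition offline_optimal ::
  "nat \<Rightarrow> real \<Rightarrow> real \<Rightarrow> (nat \<Rightarrow> real) \<Rightarrow> (nat \<Rightarrow> real) \<Rightarrow> bool" where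
  "offline_optimal n B C y u \<longleftrightarrow> tv_feasible n B C u \<and>
     (\<forall>v. tv_feasible n B C v \<longrightarrow>
        (1/2) * (\<Sum>t=1..n. (y t - u t)\<^sup>2) \<le> (1/2) * (\<Sum>t=1..n. (y t - v t)\<^sup>2))"

definition structure1 :: "(nat \<Rightarrow> real) \<Rightarrow> real \<Rightarrow> nat \<Rightarrow> nat \<Rightarrow> bool" where
  "structure1 u B a b \<longleftrightarrow> (\<forall>j\<in>{a..b}. u j = u a) \<and> - B < u a \<and> u a < B \<and>
     u b > u (b + 1) \<and> u a > u (a - 1)"

definition structure2 :: "(nat \<Rightarrow> real) \<Rightarrow> real \<Rightarrow> nat \<Rightarrow> nat \<Rightarrow> bool" where
  "structure2 u B a b \<longleftrightarrow> (\<forall>j\<in>{a..b}. u j = u a) \<and> - B < u a \<and> u a < B \<and>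
     u b < u (b + 1) \<and> u a < u (a - 1)"

end

theory Submission
  imports Defs
begin

text \<open>On a plateau \<open>[a, b]\<close> strictly inside the box the box multipliers vanish, so
summing the stationarity conditions over the plateau telescopes the subgradients of the
total variation term: the residuals \<open>u t - y t\<close> add up to \<open>\<lambda> (s b - s (a - 1))\<close>.
The plateau is entered and left in the same direction, so these two subgradients are
\<open>\<plusminus>1\<close> with opposite signs and the sum has absolute value \<open>2\<lambda>\<close>, while each of the
\<open>\<ell>\<close> residuals is at most \<open>B + G\<close>.\<close>

lemma sum_diff_pred_telescope:
  fixes f :: "nat \<Rightarrow> 'a::ab_group_add"
  assumes "1 \<le> a" "a \<le> b"
  shows "(\<Sum>t=a..b. f t - f (t - 1)) = f b - f (a - 1)"
  using assms(2)
proof (induction b rule: dec_induct)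
  case base
  then show ?case by simp
next
  case (step b)
  then show ?case by (simp add: sum.cl_ivl_Suc)
qed

lemma abs_subgradient_jump_at_plateau:
  fixes u s :: "nat \<Rightarrow> real"
  assumes "u b = u a"
    and "(u (b + 1) < u b \<and> u (a - 1) < u a) \<or> (u b < u (b + 1) \<and> u a < u (a - 1))"
    and "u (b + 1) \<noteq> u b \<Longrightarrow> s b = sgn (u (b + 1) - u b)"
    and "u a \<noteq> u (a - 1) \<Longrightarrow> s (a - 1) = sgn (u a - u (a - 1))"
  shows "\<bar>s b - s (a - 1)\<bar> = 2"
  using assms by (auto simp: sgn_if)

lemma stationarity_inside_box:
  fixes x y lam d gm gp B :: real
  assumes "- B < x" "x < B" "gm * (x + B) = 0" "gp * (x - B) = 0"
    and "x - y = lam * d + gm - gp"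
  shows "x - y = lam * d"
  using assms by auto

lemma abs_sum_le_card_mult:
  fixes f :: "'a \<Rightarrow> real"
  assumes "\<And>t. t \<in> A \<Longrightarrow> \<bar>f t\<bar> \<le> M"
  shows "\<bar>\<Sum>t\<in>A. f t\<bar> \<le> real (card A) * M"
  by (rule order_trans[OF sum_abs sum_bounded_above]) (rule assms)

lemma dual_bound_from_block:
  fixes r s :: "nat \<Rightarrow> real"
  assumes "1 \<le> a" "a \<le> b" "lam \<ge> 0"
    and "\<And>t. t \<in> {a..b} \<Longrightarrow> r t = lam * (s t - s (t - 1))"
    and "\<And>t. t \<in> {a..b} \<Longrightarrow> \<bar>r t\<bar> \<le> M"
    and "\<bar>s b - s (a - 1)\<bar> = 2"
  shows "2 * lam \<le> real (card {a..b}) * M"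
proof -
  have "(\<Sum>t=a..b. r t) = lam * (\<Sum>t=a..b. s t - s (t - 1))"
    using assms(4) by (simp add: sum_distrib_left)
  also have "\<dots> = lam * (s b - s (a - 1))"
    using sum_diff_pred_telescope[OF assms(1,2), of s] by simp
  finally have "\<bar>\<Sum>t=a..b. r t\<bar> = 2 * lam"
    using assms(3,6) by (simp add: abs_mult)
  then show ?thesis
    using abs_sum_le_card_mult[of "{a..b}" r M] assms(5) by simp
qed

theorem lemma2:
  fixes n j l :: nat and B G C lam :: real
    and y u s gm gp :: "nat \<Rightarrow> real"
  assumes "n \<ge> 3" and "B \<ge> 1" and "G \<ge> B" and "C > 0"
    and "\<forall>t\<in>{1..n}. - G \<le> y t \<and> y t \<le> G"
    and "offline_optimal n B C y u"
    and "lam \<ge> 0"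
    and "\<forall>t\<in>{1..n}. gm t \<ge> 0 \<and> gp t \<ge> 0"
    and "\<forall>t\<in>{1..n-1}. - 1 \<le> s t \<and> s t \<le> 1 \<and>
           (u (t + 1) \<noteq> u t \<longrightarrow> s t = sgn (u (t + 1) - u t))"
    and "s 0 = 0" and "s n = 0"
    and "\<forall>t\<in>{1..n}. u t - y t = lam * (s t - s (t - 1)) + gm t - gp t"
    and "lam * ((\<Sum>t=2..n. \<bar>u t - u (t - 1)\<bar>) - C) = 0"
    and "\<forall>t\<in>{1..n}. gm t * (u t + B) = 0 \<and> gp t * (u t - B) = 0"
    and "j \<in> {2..n-1}" and "l > 0" and "{j..j+l-1} \<subseteq> {2..n-1}"
    and "structure1 u B j (j + l - 1) \<or> structure2 u B j (j + l - 1)"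
  shows "lam \<le> (B + G) * real l / 2"
proof -
  define b where "b = j + l - 1"
  have block: "1 \<le> j" "j \<le> b" "card {j..b} = l" "{j..b} \<subseteq> {1..n}"
    and ends: "b \<in> {1..n-1}" "j - 1 \<in> {1..n-1}" "j - 1 + 1 = j"
    using assms(15,16,17) b_def by auto
  have "(\<forall>t\<in>{j..b}. u t = u j) \<and> - B < u j \<and> u j < B"
    and exits: "(u (b + 1) < u b \<and> u (j - 1) < u j) \<or> (u b < u (b + 1) \<and> u j < u (j - 1))"
    using assms(18) unfolding structure1_def structure2_def b_def by blast+
  then have plateau: "\<And>t. t \<in> {j..b} \<Longrightarrow> u t = u j" "- B < u j" "u j < B"
    by blast+
  have stationary: "u t - y t = lam * (s t - s (t - 1))"
    and bounded: "\<bar>u t - y t\<bar> \<le> B + G" if "t \<in> {j..b}" for t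
  proof -
    have t: "t \<in> {1..n}" and "u t = u j"
      using that block(4) plateau(1) by blast+
    then have "- B < u t" "u t < B"
      using plateau(2,3) by simp_all
    then show "u t - y t = lam * (s t - s (t - 1))"
      using stationarity_inside_box bspec[OF assms(14) t] bspec[OF assms(12) t] by blast
    show "\<bar>u t - y t\<bar> \<le> B + G"
      using \<open>- B < u t\<close> \<open>u t < B\<close> bspec[OF assms(5) t] by (simp add: abs_le_iff)
  qed
  have "\<bar>s b - s (j - 1)\<bar> = 2"
  proof (rule abs_subgradient_jump_at_plateau[OF _ exits])
    show "u b = u j"
      using plateau(1)[of b] block(2) by simp
    show "s b = sgn (u (b + 1) - u b)" if "u (b + 1) \<noteq> u b"
      using bspec[OF assms(9) ends(1)] that by blast
    show "s (j - 1) = sgn (u j - u (j - 1))" if "u j \<noteq> u (j - 1)"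
      using bspec[OF assms(9) ends(2)] that unfolding ends(3) by blast
  qed
  then have "2 * lam \<le> real l * (B + G)"
    using dual_bound_from_block[where r = "\<lambda>t. u t - y t" and s = s,
        OF block(1,2) assms(7) stationary bounded] block(3)
    by simp
  then show ?thesis
    by (simp add: mult.commute)
qed

end
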